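(* Let $n\ge3$ be odd and write $c_j=\cos(2\pi j/n)$. Then $$Su_1:=\frac32\sum_{j=0}^{\lfloor n/4\rfloor}\sum_{k=0}^{\lfloor n/4\rfloor}\frac{1}{|c_j-c_k+1|}\ \le\ \frac38\,n^2\ln n.$$
   Context: $\ln$ denotes the natural logarithm. (This quantity is one of four pieces of $\sum_{j=0}^{(n-1)/2}\sum_{k=n}^{(3n-1)/2}1/|\lambda_j-\lambda_k|=\frac32\sum_{j,k=0}^{(n-1)/2}1/|c_j-c_k+1|$, where $\lambda_j$ are the eigenvalues of the normalized adjacency matrix of the Cayley graph of $D_{2n}$ with generators $\{a,a^{-1},b\}$.) *)

theory Defs
  imports Complex_Main
begin

end

theory Submission
  imports Defs "HOL-Analysis.Harmonic_Numbers"
begin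

text \<open>For \<open>j \<le> n/4\<close> Jordan's inequality (concavity of \<open>cos\<close> on \<open>[0, \<pi>/2]\<close>) gives
  \<open>c\<^sub>j \<ge> 1 - 4j/n\<close>, while \<open>c\<^sub>k \<le> 1\<close>, so every term is at most \<open>n/(n - 4j)\<close>.
  Summing these reciprocals of an arithmetic progression by comparison with \<open>ln\<close>
  bounds the double sum by \<open>(m + 1) n (1 + ln n / 4)\<close> with \<open>m = \<lfloor>n/4\<rfloor>\<close>, which is
  below the claimed bound once \<open>n \<ge> 9\<close>; for \<open>n = 3, 5, 7\<close> the double sum has at most four
  terms and is estimated directly.\<close>

lemma concave_on_cos: "concave_on {-(pi/2)..pi/2} cos"
  unfolding concave_on_def
proof (rule f''_ge0_imp_convex)
  fix x :: real assume "x \<in> {-(pi/2)..pi/2}"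
  then show "0 \<le> cos x" by (auto intro: cos_ge_zero)
qed (auto intro!: derivative_eq_intros)

lemma cos_ge_Jordan:
  assumes "0 \<le> t" "t \<le> pi/2"
  shows "1 - 2 * t / pi \<le> cos t"
proof -
  have "concave_on {0..pi/2} cos"
    using concave_on_cos unfolding concave_on_def by (rule convex_on_subset) auto
  from concave_onD_Icc'[OF this, of t] assms
  show ?thesis by (simp add: field_simps)
qed

lemma sum_inverse_arith_progression_le:
  fixes x d :: real
  assumes "0 < x" "0 < d"
  shows "(\<Sum>i\<le>m. 1 / (x + d * real i)) \<le> 1 / x + ln ((x + d * real m) / x) / d"
proof (induction m)
  case (Suc m)
  define a where "a = x + d * real m"
  have a: "0 < a" and b: "x + d * real (Suc m) = a + d"
    using assms by (auto simp: a_def algebra_simps add_pos_nonneg)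
  have "ln (a / (a + d)) \<le> a / (a + d) - 1"
    using a assms by (intro ln_le_minus_one) auto
  also have "\<dots> = - d / (a + d)"
    using a assms by (simp add: field_simps)
  finally have "1 / (a + d) \<le> (ln ((a + d) / x) - ln (a / x)) / d"
    using a assms by (simp add: ln_div field_simps)
  moreover have "(\<Sum>i\<le>Suc m. 1 / (x + d * real i)) = (\<Sum>i\<le>m. 1 / (x + d * real i)) + 1 / (a + d)"
    by (simp only: sum.atMost_Suc b)
  ultimately show ?case
    using Suc by (simp only: b a_def[symmetric] diff_divide_distrib)
qed simp

lemma inverse_cos_gap_le:
  assumes "4 * j < n"
  shows "1 / \<bar>cos (2 * pi * real j / real n) - cos y + 1\<bar> \<le> real n / (real n - 4 * real j)"
proof -
  have lt: "4 * real j < real n" and n: "0 < real n"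
    using assms by linarith+
  have "1 - 2 * (2 * pi * real j / real n) / pi \<le> cos (2 * pi * real j / real n)"
    using lt n by (intro cos_ge_Jordan) (auto simp: field_simps)
  moreover have "1 - 2 * (2 * pi * real j / real n) / pi = (real n - 4 * real j) / real n"
    using n by (simp add: field_simps)
  ultimately have gap: "(real n - 4 * real j) / real n \<le> cos (2 * pi * real j / real n) - cos y + 1"
    using cos_le_one[of y] by linarith
  have "0 < (real n - 4 * real j) / real n"
    using lt n by simp
  with gap have "1 / \<bar>cos (2 * pi * real j / real n) - cos y + 1\<bar> \<le> 1 / ((real n - 4 * real j) / real n)"
    using frac_le[of 1 1 "(real n - 4 * real j) / real n"] by (simp del: divide_divide_eq_right)
  then show ?thesis
    by simp
qed

lemma cos_gap_double_sum_le:
  assumes "4 * m < n"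
  shows "(\<Sum>j\<in>{0..m}. \<Sum>k\<in>{0..m}.
            1 / \<bar>cos (2*pi*real j / real n) - cos (2*pi*real k / real n) + 1\<bar>)
         \<le> real (m + 1) * real n * (1 + ln (real n) / 4)"
proof -
  define x where "x = real n - 4 * real m"
  have x: "1 \<le> x" "x \<le> real n"
    using assms by (auto simp: x_def)
  have "(\<Sum>j\<in>{0..m}. \<Sum>k\<in>{0..m}.
            1 / \<bar>cos (2*pi*real j / real n) - cos (2*pi*real k / real n) + 1\<bar>)
        \<le> (\<Sum>j\<in>{0..m}. \<Sum>k\<in>{0..m}. real n / (real n - 4 * real j))"
    using assms by (intro sum_mono inverse_cos_gap_le) auto
  also have "\<dots> = real (m + 1) * real n * (\<Sum>j\<in>{0..m}. 1 / (real n - 4 * real j))"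
    by (simp add: sum_distrib_left)
  also have "(\<Sum>j\<in>{0..m}. 1 / (real n - 4 * real j)) = (\<Sum>i\<le>m. 1 / (x + 4 * real i))"
    by (subst sum.atLeastAtMost_rev) (simp add: atLeast0AtMost x_def of_nat_diff algebra_simps)
  also have "\<dots> \<le> 1 / x + ln ((x + 4 * real m) / x) / 4"
    using x by (intro sum_inverse_arith_progression_le) auto
  also have "\<dots> \<le> 1 + ln (real n) / 4"
  proof -
    have "ln ((x + 4 * real m) / x) \<le> ln (real n)"
      using x by (simp add: x_def ln_div)
    moreover have "1 / x \<le> 1"
      using x by simp
    ultimately show ?thesis
      by linarith
  qed
  finally show ?thesis
    by (simp add: mult_left_mono)
qed

lemma ln_ge_2_if_ge_9:
  assumes "9 \<le> x"
  shows "2 \<le> ln (x :: real)"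
proof -
  have "exp 2 = exp 1 * exp (1 :: real)"
    by (simp flip: exp_add)
  also have "\<dots> \<le> 3 * 3"
    using exp_le by (intro mult_mono) auto
  finally show ?thesis
    using assms by (subst ln_ge_iff) auto
qed

lemma scaled_bound_le_n_sq_ln:
  assumes "9 \<le> n" and "4 * m < n"
  shows "(3/2) * (real (m + 1) * real n * (1 + ln (real n) / 4)) \<le> (3/8) * (real n)^2 * ln (real n)"
proof -
  define L where "L = ln (real n)"
  have L: "2 \<le> L" and n: "9 \<le> real n"
    using assms ln_ge_2_if_ge_9[of "real n"] by (auto simp: L_def)
  have "4 * real (m + 1) \<le> real n + 3"
    using assms(2) by simp
  then have "4 * real (m + 1) * (1 + L / 4) \<le> (real n + 3) * (1 + L / 4)"
    using L by (intro mult_right_mono) auto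
  also have "\<dots> \<le> real n * L"
  proof -
    have "2 * (3 * real n - 3) \<le> L * (3 * real n - 3)"
      using L n by (intro mult_right_mono) auto
    then have "6 * real n - 6 \<le> 3 * (real n * L) - 3 * L"
      by (simp add: algebra_simps)
    moreover have "(real n + 3) * (1 + L / 4) = real n + 3 + (real n * L) / 4 + 3 * L / 4"
      by (simp add: algebra_simps)
    ultimately show ?thesis
      using n by linarith
  qed
  finally have "4 * real (m + 1) * (1 + L / 4) \<le> real n * L" .
  then have "(3/8) * real n * (4 * real (m + 1) * (1 + L / 4)) \<le> (3/8) * real n * (real n * L)"
    by (intro mult_left_mono) auto
  moreover have "(3/2) * (real (m + 1) * real n * (1 + L / 4)) = (3/8) * real n * (4 * real (m + 1) * (1 + L / 4))"
    by simp
  moreover have "(3/8) * real n * (real n * L) = (3/8) * (real n)^2 * L"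
    by (simp add: power2_eq_square)
  ultimately show ?thesis
    unfolding L_def by linarith
qed

lemma sum_01_cos_gap_le:
  assumes "4 < n"
  shows "(\<Sum>j\<in>{0..1}. \<Sum>k\<in>{0..1}.
            1 / \<bar>cos (2*pi*real j / real n) - cos (2*pi*real k / real n) + 1\<bar>)
         \<le> 3 + real n / (real n - 4)"
  using inverse_cos_gap_le[of 0 n "2 * pi / real n"] inverse_cos_gap_le[of 1 n 0] assms
  by (simp add: numeral_2_eq_2 atLeast0_atMost_Suc)

theorem mainTheorem4:
  fixes n :: nat
  assumes "n \<ge> 3" and "odd n"
  shows "(3/2) * (\<Sum>j\<in>{0..n div 4}. \<Sum>k\<in>{0..n div 4}.
            1 / \<bar>cos (2*pi*real j / real n) - cos (2*pi*real k / real n) + 1\<bar>)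
         \<le> (3/8) * (real n)^2 * ln (real n)"
proof -
  have m: "4 * (n div 4) < n"
    using assms(2) by presburger
  have "9 \<le> n \<or> n = 3 \<or> n = 5 \<or> n = 7"
    using assms by presburger
  then consider "9 \<le> n" | "n = 3" | "n = 5" | "n = 7"
    by blast
  then show ?thesis
  proof cases
    case 1
    then show ?thesis
      using cos_gap_double_sum_le[OF m] scaled_bound_le_n_sq_ln[OF 1 m] by linarith
  next
    case 2
    have "1 \<le> ln (3 :: real)"
      using exp_le by (subst ln_ge_iff) auto
    with 2 show ?thesis
      by simp
  next
    case 3
    have "ln (4 :: real) \<le> ln 5"
      by (subst ln_le_cancel_iff) auto
    moreover have "ln (4 :: real) = 2 * ln 2"
      using ln_realpow[of 2 2] by simp
    ultimately have "4/3 \<le> ln (5 :: real)"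
      using ln2_ge_two_thirds by linarith
    with 3 show ?thesis
      using sum_01_cos_gap_le[of n] by simp
  next
    case 4
    have "1 \<le> ln (7 :: real)"
      using exp_le by (subst ln_ge_iff) auto
    with 4 show ?thesis
      using sum_01_cos_gap_le[of n] by simp
  qed
qed

end
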